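(* Let $R>0$, $\sqrt3R\le s<t\le2R$ and $3<q\le6$. Let $B:\mathbb{R}^3\to\mathbb{R}^3$ be smooth, set $$J_4=\frac{1}{(t-s)^2}\int_{B_t\setminus B_s}|B|^4\,dx,$$ and define $h(q)=1$ for $3<q<4$ and $h(q)=0$ for $4\le q\le6$. (i) For any $\delta>0$ there exist positive constants $C_\delta$ and $C$ (independent of $R,s,t,B$) such that $$J_4\le\delta\|B\|_{L^6(B_t\setminus B_s)}^2+\frac{C_\delta h(q)}{(t-s)^{\frac{6-q}{q-3}}}\|B\|_{L^q(A_R)}^{\frac{q}{q-3}}+\frac{C}{(t-s)^2}R^{3-\frac{12}{q}}\|B\|_{L^q(A_R)}^4.$$ (ii) There is $C>0$ (independent of $R,s,t,B$) such that $$J_4\le\frac{CR}{(t-s)^2}\|B\|_{L^6(A_R)}^4.$$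
   Context: For $r>0$, $B_r$ is the open ball of radius $r$ centered at the origin in $\mathbb{R}^3$, and $A_R=B_{2R}\setminus\overline{B_{3R/2}}$. *)

theory Defs
  imports "HOL-Analysis.Analysis"
begin

text \<open>C-infinity smoothness: f lies in a family of everywhere (Frechet) differentiable
functions that is closed under taking directional derivatives in every direction.\<close>
definition smooth :: "('a::euclidean_space \<Rightarrow> 'b::real_normed_vector) \<Rightarrow> bool" where
  "smooth f \<longleftrightarrow> (\<exists>F. f \<in> F \<and>
      (\<forall>g\<in>F. (\<forall>x. g differentiable (at x)) \<and>
              (\<forall>v. (\<lambda>x. frechet_derivative g (at x) v) \<in> F)))"

definition Lnorm :: "real \<Rightarrow> ('a::euclidean_space) set \<Rightarrow> ('a \<Rightarrow> 'b::real_normed_vector) \<Rightarrow> real" where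
  "Lnorm p S f = (LINT x:S|lebesgue. norm (f x) powr p) powr (1 / p)"

definition annulus :: "real \<Rightarrow> (real^3) set" where
  "annulus R = ball 0 (2*R) - cball 0 (3*R/2)"

definition J4 :: "real \<Rightarrow> real \<Rightarrow> (real^3 \<Rightarrow> real^3) \<Rightarrow> real" where
  "J4 s t B = (1 / (t - s)^2) * (LINT x:(ball 0 t - ball 0 s)|lebesgue. norm (B x) ^ 4)"

definition hq :: "real \<Rightarrow> real" where
  "hq q = (if 3 < q \<and> q < 4 then 1 else 0)"

end

theory Submission
  imports Defs
begin

text \<open>Let S = B_t - B_s. Since s \<ge> sqrt 3 R > 3R/2, S lies in A_R, hence in B_{2R}, so
|S| \<le> 32/3 pi R^3. For 4 \<le> p, Hoelder's inequality on S gives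
\<integral>_S |B|^4 \<le> (\<integral>_S |B|^p)^(4/p) |S|^(1-4/p); with p = q this is (i) for q \<ge> 4, and with
p = 6 it is (ii). For 3 < q < 4, interpolating between L^q and L^6 gives
\<integral>_S |B|^4 \<le> (\<integral>_S |B|^q)^(2/(6-q)) (\<integral>_S |B|^6)^((4-q)/(6-q)); the second factor is
(||B||_6^2)^\<beta> with \<beta> = 3(4-q)/(6-q) \<in> (0,1), and Young's inequality with exponents
1/\<beta>, 1/(1-\<beta>) splits the product into \<delta> ||B||_6^2 plus C_\<delta> times the remaining power.
Smoothness of B is only used through continuity, which makes all integrals finite.\<close>

lemma nonpos_if_le_vanishing_powr:
  fixes X C a :: real
  assumes "a > 0" "C \<ge> 0" and bound: "\<And>l. l > 0 \<Longrightarrow> X \<le> l powr a * C"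
  shows "X \<le> 0"
proof (rule ccontr)
  assume "\<not> X \<le> 0"
  define l where "l = (X / (C + 1)) powr (1 / a)"
  have "l > 0" "l powr a = X / (C + 1)"
    using \<open>\<not> X \<le> 0\<close> assms(1,2) by (simp_all add: l_def powr_powr)
  then have "X \<le> X / (C + 1) * C"
    using bound by metis
  also have "\<dots> < X"
    using \<open>\<not> X \<le> 0\<close> assms(2) by (simp add: field_simps)
  finally show False by simp
qed

text \<open>Minimising over the scaling l replaces the usual normalisation by the two L^p norms in
the proof of Hoelder's inequality, so vanishing norms need no almost-everywhere argument.\<close>

lemma le_powr_mult_powr_if_scaled_Young_bound:
  fixes p q A B X :: real
  assumes pq: "p > 1" "q > 1" "1/p + 1/q = 1" and AB: "A \<ge> 0" "B \<ge> 0"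
    and bound: "\<And>l. l > 0 \<Longrightarrow> X \<le> l powr p * A / p + l powr (-q) * B / q"
  shows "X \<le> A powr (1/p) * B powr (1/q)"
proof (cases "A > 0 \<and> B > 0")
  case True
  define l where "l = A powr (-1/(p*q)) * B powr (1/(p*q))"
  have "l powr p = A powr (-1/q) * B powr (1/q)" "l powr (-q) = A powr (1/p) * B powr (-1/p)"
    using pq unfolding l_def by (simp_all add: powr_mult powr_powr)
  moreover have "1/p = -1/q + 1" "1/q = -1/p + 1"
    using pq by linarith+
  then have "A powr (-1/q) * A = A powr (1/p)" "B powr (-1/p) * B = B powr (1/q)"
    using True by (simp_all add: powr_diff powr_minus_divide)
  ultimately have "l powr p * A = A powr (1/p) * B powr (1/q)"
    "l powr (-q) * B = A powr (1/p) * B powr (1/q)"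
    by (simp_all add: ac_simps)
  moreover have "l > 0"
    using True by (simp add: l_def)
  ultimately have "X \<le> A powr (1/p) * B powr (1/q) * (1/p + 1/q)"
    using bound[of l] by (simp add: distrib_left)
  then show ?thesis
    using pq(3) by simp
next
  case False
  then consider "A = 0" | "B = 0" using AB by linarith
  then have "X \<le> 0"
  proof cases
    case 1
    show ?thesis
    proof (rule nonpos_if_le_vanishing_powr)
      fix l :: real assume "l > 0"
      show "X \<le> l powr q * (B / q)"
        using bound[of "1 / l"] \<open>l > 0\<close> 1 by (simp add: powr_minus_divide powr_divide)
    qed (use pq AB in auto)
  next
    case 2
    show ?thesis
      by (rule nonpos_if_le_vanishing_powr[of p "A / p"]) (use pq AB bound 2 in auto)
  qed
  then show ?thesis using False AB by auto
qed

lemma set_integral_nonneg: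
  fixes f :: "'a \<Rightarrow> real"
  assumes "\<And>x. x \<in> S \<Longrightarrow> 0 \<le> f x"
  shows "0 \<le> (LINT x:S|M. f x)"
  unfolding set_lebesgue_integral_def
  using assms by (auto intro!: integral_nonneg_AE simp: indicator_def)

lemma set_integral_mono_set:
  fixes f :: "'a \<Rightarrow> real"
  assumes "set_integrable M A f" "B \<in> sets M" "B \<subseteq> A" "\<And>x. x \<in> A \<Longrightarrow> 0 \<le> f x"
  shows "(LINT x:B|M. f x) \<le> (LINT x:A|M. f x)"
  unfolding set_lebesgue_integral_def
proof (rule integral_mono)
  show "integrable M (\<lambda>x. indicator B x *\<^sub>R f x)"
    using set_integrable_subset[OF assms(1-3)] by (simp add: set_integrable_def)
  show "integrable M (\<lambda>x. indicator A x *\<^sub>R f x)"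
    using assms(1) by (simp add: set_integrable_def)
qed (use assms(3,4) in \<open>auto simp: indicator_def\<close>)

lemma set_Hoelder_inequality:
  fixes f g :: "'a \<Rightarrow> real"
  assumes pq: "p > 1" "q > 1" "1/p + 1/q = 1"
    and nonneg: "\<And>x. 0 \<le> f x" "\<And>x. 0 \<le> g x"
    and int: "set_integrable M S (\<lambda>x. f x powr p)" "set_integrable M S (\<lambda>x. g x powr q)"
      "set_integrable M S (\<lambda>x. f x * g x)"
  shows "(LINT x:S|M. f x * g x) \<le> (LINT x:S|M. f x powr p) powr (1/p) * (LINT x:S|M. g x powr q) powr (1/q)"
proof (rule le_powr_mult_powr_if_scaled_Young_bound[OF pq])
  show "0 \<le> (LINT x:S|M. f x powr p)" "0 \<le> (LINT x:S|M. g x powr q)"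
    by (simp_all add: set_integral_nonneg)
  fix l :: real assume "l > 0"
  have Young: "f x * g x \<le> l powr p / p * f x powr p + l powr (-q) / q * g x powr q" for x
  proof -
    have "f x * g x = (l * f x) * (g x / l)" using \<open>l > 0\<close> by simp
    also have "\<dots> \<le> (l * f x) powr p / p + (g x / l) powr q / q"
      by (rule Youngs_inequality) (use pq nonneg \<open>l > 0\<close> in auto)
    finally show ?thesis
      using \<open>l > 0\<close> nonneg by (simp add: powr_mult powr_divide powr_minus_divide)
  qed
  have "(LINT x:S|M. f x * g x) \<le> (LINT x:S|M. l powr p / p * f x powr p + l powr (-q) / q * g x powr q)"
    using int Young by (intro set_integral_mono) auto
  also have "\<dots> = l powr p * (LINT x:S|M. f x powr p) / p + l powr (-q) * (LINT x:S|M. g x powr q) / q"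
    using int by simp
  finally show "(LINT x:S|M. f x * g x) \<le> \<dots>" .
qed

text \<open>The bound V must be positive because \<open>0 powr 0 = 0\<close>, which matters when r = p.\<close>

lemma set_integral_powr_le_measure_bound:
  fixes f :: "'a \<Rightarrow> real"
  assumes rp: "0 < r" "r \<le> p" and nonneg: "\<And>x. 0 \<le> f x"
    and S: "S \<in> fmeasurable M" "measure M S \<le> V" "0 < V"
    and int: "set_integrable M S (\<lambda>x. f x powr p)" "set_integrable M S (\<lambda>x. f x powr r)"
  shows "(LINT x:S|M. f x powr r) \<le> (LINT x:S|M. f x powr p) powr (r/p) * V powr (1 - r/p)"
proof (cases "r = p")
  case True
  then show ?thesis
    using rp S by (simp add: set_integral_nonneg)
next
  case False
  then have "r < p" using rp by simp
  have power: "(f x powr r) powr (p/r) = f x powr p" for x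
    using rp by (simp add: powr_powr)
  have "(LINT x:S|M. f x powr r * 1)
      \<le> (LINT x:S|M. (f x powr r) powr (p/r)) powr (1/(p/r)) * (LINT x:S|M. 1 powr (p/(p-r))) powr (1/(p/(p-r)))"
  proof (rule set_Hoelder_inequality)
    show "1 / (p/r) + 1 / (p/(p-r)) = 1"
      using rp by (simp add: field_simps)
    show "set_integrable M S (\<lambda>x. 1 powr (p/(p-r)))"
      using S(1) by (simp add: set_integrable_def fmeasurable_def)
  qed (use \<open>r < p\<close> rp nonneg int power in auto)
  also have "\<dots> = (LINT x:S|M. f x powr p) powr (r/p) * measure M S powr (1 - r/p)"
  proof -
    have "(LINT x:S|M. (1::real)) = measure M S"
      using S(1) set_integral_const[of S M "1::real"] by (simp add: fmeasurable_def less_top)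
    moreover have "1 / (p/(p-r)) = 1 - r/p"
      using \<open>r < p\<close> rp by (simp add: field_simps)
    ultimately show ?thesis
      by (simp add: power)
  qed
  also have "\<dots> \<le> (LINT x:S|M. f x powr p) powr (r/p) * V powr (1 - r/p)"
    using S(2) \<open>r < p\<close> rp by (intro mult_left_mono powr_mono2) auto
  finally show ?thesis by simp
qed

lemma set_integral_powr_interpolation:
  fixes f :: "'a \<Rightarrow> real"
  assumes exps: "0 < p\<^sub>0" "p\<^sub>0 < r" "r < p\<^sub>1" and nonneg: "\<And>x. 0 \<le> f x"
    and int: "set_integrable M S (\<lambda>x. f x powr p\<^sub>0)" "set_integrable M S (\<lambda>x. f x powr p\<^sub>1)"
      "set_integrable M S (\<lambda>x. f x powr r)"
  shows "(LINT x:S|M. f x powr r)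
    \<le> (LINT x:S|M. f x powr p\<^sub>0) powr ((p\<^sub>1 - r) / (p\<^sub>1 - p\<^sub>0))
      * (LINT x:S|M. f x powr p\<^sub>1) powr ((r - p\<^sub>0) / (p\<^sub>1 - p\<^sub>0))"
proof -
  define a where "a = p\<^sub>0 * (p\<^sub>1 - r) / (p\<^sub>1 - p\<^sub>0)"
  define b where "b = p\<^sub>1 * (r - p\<^sub>0) / (p\<^sub>1 - p\<^sub>0)"
  define P where "P = (p\<^sub>1 - p\<^sub>0) / (p\<^sub>1 - r)"
  define Q where "Q = (p\<^sub>1 - p\<^sub>0) / (r - p\<^sub>0)"
  have "p\<^sub>1 - p\<^sub>0 \<noteq> 0" "p\<^sub>1 - r \<noteq> 0" "r - p\<^sub>0 \<noteq> 0"
    using exps by simp_all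
  then have "a + b = r" "a * P = p\<^sub>0" "b * Q = p\<^sub>1"
    unfolding a_def b_def P_def Q_def
    by (simp_all add: add_divide_distrib[symmetric]) (simp add: divide_eq_eq algebra_simps)
  then have split: "f x powr a * f x powr b = f x powr r"
    and powers: "(f x powr a) powr P = f x powr p\<^sub>0" "(f x powr b) powr Q = f x powr p\<^sub>1" for x
    by (simp_all add: powr_add[symmetric] powr_powr)
  have "(LINT x:S|M. f x powr a * f x powr b)
      \<le> (LINT x:S|M. (f x powr a) powr P) powr (1/P) * (LINT x:S|M. (f x powr b) powr Q) powr (1/Q)"
  proof (rule set_Hoelder_inequality)
    show "P > 1" "Q > 1"
      using exps by (simp_all add: P_def Q_def)
    show "1/P + 1/Q = 1"
      using exps by (simp add: P_def Q_def add_divide_distrib[symmetric])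
  qed (use nonneg int split powers in auto)
  then show ?thesis
    unfolding split powers by (simp add: P_def Q_def)
qed

definition Young_constant :: "real \<Rightarrow> real \<Rightarrow> real" where
  "Young_constant \<beta> \<epsilon> = (1 - \<beta>) * (\<epsilon> / \<beta>) powr (- \<beta> / (1 - \<beta>))"

lemma Young_constant_pos: "0 < \<beta> \<Longrightarrow> \<beta> < 1 \<Longrightarrow> 0 < \<epsilon> \<Longrightarrow> 0 < Young_constant \<beta> \<epsilon>"
  by (simp add: Young_constant_def)

lemma Youngs_inequality_epsilon:
  fixes X Y \<beta> \<epsilon> :: real
  assumes "0 < \<beta>" "\<beta> < 1" "0 \<le> X" "0 \<le> Y" "0 < \<epsilon>"
  shows "Y * X powr \<beta> \<le> \<epsilon> * X + Young_constant \<beta> \<epsilon> * Y powr (1 / (1 - \<beta>))"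
proof -
  define d where "d = \<epsilon> / \<beta>"
  have "d > 0" using assms by (simp add: d_def)
  have "Y * X powr \<beta> = (d * X) powr \<beta> * (Y * d powr (-\<beta>))"
    using \<open>d > 0\<close> assms by (simp add: powr_mult powr_minus field_simps)
  also have "\<dots> \<le> ((d * X) powr \<beta>) powr (1/\<beta>) / (1/\<beta>) + (Y * d powr (-\<beta>)) powr (1/(1-\<beta>)) / (1/(1-\<beta>))"
    by (rule Youngs_inequality) (use assms \<open>d > 0\<close> in \<open>auto simp: field_simps\<close>)
  also have "\<dots> = \<epsilon> * X + Young_constant \<beta> \<epsilon> * Y powr (1 / (1 - \<beta>))"
    using assms \<open>d > 0\<close> by (simp add: Young_constant_def d_def powr_powr powr_mult)
  finally show ?thesis .
qed


lemma continuous_on_smooth: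
  assumes "smooth f"
  shows "continuous_on UNIV f"
proof -
  from assms obtain F where "f \<in> F" "\<forall>g\<in>F. \<forall>x. g differentiable (at x)"
    unfolding smooth_def by blast
  then show ?thesis
    by (simp add: continuous_at_imp_continuous_on differentiable_imp_continuous_within)
qed

lemma set_integrable_norm_powr:
  fixes f :: "'a::euclidean_space \<Rightarrow> 'b::real_normed_vector"
  assumes "continuous_on UNIV f" "0 < r" "bounded S" "S \<in> sets lebesgue"
  shows "set_integrable lebesgue S (\<lambda>x. norm (f x) powr r)"
proof -
  obtain a b where "S \<subseteq> cbox a b"
    using assms(3) bounded_subset_cbox_symmetric by blast
  moreover have "continuous_on (cbox a b) (\<lambda>x. norm (f x) powr r)"
    using assms(1,2) by (auto intro!: continuous_on_powr' continuous_on_norm intro: continuous_on_subset)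
  then have "(\<lambda>x. norm (f x) powr r) absolutely_integrable_on cbox a b"
    by (rule absolutely_integrable_continuous)
  ultimately show ?thesis
    using set_integrable_subset assms(4) by blast
qed

lemma Lnorm_powr: "Lnorm p S f powr a = (LINT x:S|lebesgue. norm (f x) powr p) powr (a / p)"
  by (simp add: Lnorm_def powr_powr)

lemma Lnorm_power: "n \<noteq> 0 \<Longrightarrow> Lnorm p S f ^ n = (LINT x:S|lebesgue. norm (f x) powr p) powr (n / p)"
  by (simp add: powr_realpow'[symmetric] Lnorm_def powr_powr)

lemma J4_eq: "J4 s t B = (LINT x:(ball 0 t - ball 0 s)|lebesgue. norm (B x) powr 4) / (t - s)^2"
  by (simp add: J4_def)

lemma shell_subset_annulus:
  assumes "R > 0" "sqrt 3 * R \<le> s" "t \<le> 2 * R"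
  shows "ball (0::real^3) t - ball 0 s \<subseteq> annulus R"
proof -
  have "3/2 < sqrt (3::real)"
    by (rule real_less_rsqrt) (simp add: power2_eq_square)
  then have "3 * R / 2 < s"
    using mult_strict_right_mono[of "3/2" "sqrt 3" R] assms(1,2) by linarith
  then show ?thesis
    using assms(3) by (auto simp: annulus_def)
qed

lemma measure_annulus_le:
  assumes "R > 0"
  shows "measure lebesgue (annulus R) \<le> 32/3 * pi * R^3"
proof -
  have "measure lebesgue (annulus R) \<le> measure lebesgue (ball (0::real^3) (2 * R))"
    by (rule measure_mono_fmeasurable) (auto simp: annulus_def)
  also have "\<dots> = 32/3 * pi * R^3"
    using sphere_volume[of "2 * R" 0] \<open>R > 0\<close> by simp
  finally show ?thesis .
qed

lemma set_integrable_shell_norm_powr: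
  fixes f :: "'a::euclidean_space \<Rightarrow> 'b::real_normed_vector"
  assumes "smooth f" "0 < p"
  shows "set_integrable lebesgue (ball 0 t - ball 0 s) (\<lambda>x. norm (f x) powr p)"
  using continuous_on_smooth[OF assms(1)] assms(2)
  by (rule set_integrable_norm_powr) (auto intro: bounded_subset[OF bounded_ball])

lemma shell_integral_le_annulus_integral:
  assumes "R > 0" "sqrt 3 * R \<le> s" "t \<le> 2 * R" "smooth B" "0 < p"
  shows "(LINT x:(ball 0 t - ball 0 s)|lebesgue. norm (B x) powr p)
    \<le> (LINT x:annulus R|lebesgue. norm (B x) powr p)"
proof (rule set_integral_mono_set)
  show "set_integrable lebesgue (annulus R) (\<lambda>x. norm (B x) powr p)"
    using continuous_on_smooth[OF assms(4)] assms(5)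
    by (rule set_integrable_norm_powr) (auto simp: annulus_def intro: bounded_subset[OF bounded_ball])
  show "ball 0 t - ball 0 s \<subseteq> annulus R"
    using assms(1-3) by (rule shell_subset_annulus)
qed auto

lemma J4_le_Lnorm_annulus:
  assumes "R > 0" "sqrt 3 * R \<le> s" "t \<le> 2 * R" "smooth B" "4 \<le> p"
  shows "J4 s t B \<le> (32/3 * pi) powr (1 - 4/p) / (t - s)^2 * R powr (3 - 12/p) * Lnorm p (annulus R) B ^ 4"
proof -
  let ?S = "ball (0::real^3) t - ball 0 s"
  let ?V = "32/3 * pi * R^3"
  have "?S \<in> lmeasurable" "annulus R \<in> lmeasurable"
    by (auto simp: annulus_def intro!: bounded_set_imp_lmeasurable intro: bounded_subset[OF bounded_ball])
  moreover have "measure lebesgue ?S \<le> ?V"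
    using measure_mono_fmeasurable[OF shell_subset_annulus[OF assms(1-3)]] calculation
      measure_annulus_le[OF assms(1)] by fastforce
  ultimately have "(LINT x:?S|lebesgue. norm (B x) powr 4)
      \<le> (LINT x:?S|lebesgue. norm (B x) powr p) powr (4/p) * ?V powr (1 - 4/p)"
    using assms(1,4,5)
    by (intro set_integral_powr_le_measure_bound set_integrable_shell_norm_powr) auto
  also have "\<dots> \<le> (LINT x:annulus R|lebesgue. norm (B x) powr p) powr (4/p) * ?V powr (1 - 4/p)"
    using assms shell_integral_le_annulus_integral[OF assms(1-4), of p]
    by (intro mult_right_mono powr_mono2) (auto simp: set_integral_nonneg)
  also have "\<dots> = (32/3 * pi) powr (1 - 4/p) * R powr (3 - 12/p) * Lnorm p (annulus R) B ^ 4"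
  proof -
    have "(R^3) powr (1 - 4/p) = (R powr 3) powr (1 - 4/p)"
      using assms(1) by simp
    also have "\<dots> = R powr (3 - 12/p)"
      by (simp add: powr_powr right_diff_distrib)
    finally have "(32/3 * pi * R^3) powr (1 - 4/p) = (32/3 * pi) powr (1 - 4/p) * R powr (3 - 12/p)"
      using assms(1) powr_mult[of "32/3 * pi" "R^3"] by simp
    then show ?thesis
      by (simp add: Lnorm_power)
  qed
  finally show ?thesis
    unfolding J4_eq by (simp add: divide_right_mono)
qed

lemma shell_integral_interpolation:
  assumes "R > 0" "sqrt 3 * R \<le> s" "t \<le> 2 * R" "smooth B" "3 < q" "q < 4"
  shows "(LINT x:(ball 0 t - ball 0 s)|lebesgue. norm (B x) powr 4)
    \<le> (LINT x:annulus R|lebesgue. norm (B x) powr q) powr (2 / (6 - q))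
      * (LINT x:(ball 0 t - ball 0 s)|lebesgue. norm (B x) powr 6) powr ((4 - q) / (6 - q))"
proof -
  let ?S = "ball (0::real^3) t - ball 0 s"
  have "(LINT x:?S|lebesgue. norm (B x) powr 4)
      \<le> (LINT x:?S|lebesgue. norm (B x) powr q) powr ((6 - 4) / (6 - q))
        * (LINT x:?S|lebesgue. norm (B x) powr 6) powr ((4 - q) / (6 - q))"
    using assms(4-6) by (intro set_integral_powr_interpolation set_integrable_shell_norm_powr) auto
  also have "\<dots> \<le> (LINT x:annulus R|lebesgue. norm (B x) powr q) powr (2 / (6 - q))
        * (LINT x:?S|lebesgue. norm (B x) powr 6) powr ((4 - q) / (6 - q))"
    using assms shell_integral_le_annulus_integral[OF assms(1-4), of q]
    by (intro mult_right_mono) (auto simp: set_integral_nonneg intro!: powr_mono2)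
  finally show ?thesis .
qed

lemma J4_le_Young_interpolation:
  fixes q \<delta> :: real
  defines "\<beta> \<equiv> 3 * (4 - q) / (6 - q)"
  assumes "R > 0" "sqrt 3 * R \<le> s" "s < t" "t \<le> 2 * R" "smooth B" "3 < q" "q < 4" "\<delta> > 0"
  shows "J4 s t B \<le> \<delta> * Lnorm 6 (ball 0 t - ball 0 s) B ^ 2
    + Young_constant \<beta> \<delta> / (t - s) powr ((6 - q) / (q - 3)) * Lnorm q (annulus R) B powr (q / (q - 3))"
proof -
  define I\<^sub>q where "I\<^sub>q = (LINT x:annulus R|lebesgue. norm (B x) powr q)"
  define I\<^sub>6 where "I\<^sub>6 = (LINT x:(ball 0 t - ball 0 s)|lebesgue. norm (B x) powr 6)"
  define X where "X = Lnorm 6 (ball 0 t - ball 0 s) B ^ 2"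
  define Y where "Y = I\<^sub>q powr (2 / (6 - q)) / (t - s) powr 2"
  have \<beta>: "0 < \<beta>" "\<beta> < 1"
    using assms(7,8) by (simp_all add: \<beta>_def field_simps)
  have X_powr: "X powr \<beta> = I\<^sub>6 powr ((4 - q) / (6 - q))"
  proof -
    have "X = I\<^sub>6 powr (1/3)"
      by (simp add: X_def I\<^sub>6_def Lnorm_power)
    moreover have "1/3 * \<beta> = (4 - q) / (6 - q)"
      unfolding \<beta>_def using assms(8) by (simp add: field_simps)
    ultimately show ?thesis
      by (simp only: powr_powr)
  qed
  have "J4 s t B \<le> Y * X powr \<beta>"
    using shell_integral_interpolation[of R s t B q] assms(2-8)
    unfolding J4_eq Y_def X_powr I\<^sub>q_def I\<^sub>6_def by (simp add: divide_right_mono)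
  also have "\<dots> \<le> \<delta> * X + Young_constant \<beta> \<delta> * Y powr (1 / (1 - \<beta>))"
    using \<beta> assms(9) by (intro Youngs_inequality_epsilon) (auto simp: X_def Y_def)
  also have "Y powr (1 / (1 - \<beta>)) = Lnorm q (annulus R) B powr (q / (q - 3)) / (t - s) powr ((6 - q) / (q - 3))"
  proof -
    have inv: "1 / (1 - \<beta>) = (6 - q) / (2 * (q - 3))"
      using assms(7,8) by (simp add: \<beta>_def field_simps)
    have "2 / (6 - q) * (1 / (1 - \<beta>)) = 1 / (q - 3)" "2 * (1 / (1 - \<beta>)) = (6 - q) / (q - 3)"
      unfolding inv using assms(7,8) by (simp_all add: divide_simps) (simp_all add: algebra_simps)
    then have "(I\<^sub>q powr (2 / (6 - q))) powr (1 / (1 - \<beta>)) = I\<^sub>q powr (1 / (q - 3))"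
      "((t - s) powr 2) powr (1 / (1 - \<beta>)) = (t - s) powr ((6 - q) / (q - 3))"
      by (simp_all only: powr_powr)
    then show ?thesis
      using assms(7) by (simp add: Y_def powr_divide Lnorm_powr I\<^sub>q_def)
  qed
  finally show ?thesis
    by (simp add: X_def)
qed

lemma J4_three_term_bound_below_4:
  assumes "3 < q" "q < 4" "0 < \<delta>" "R > 0" "sqrt 3 * R \<le> s" "s < t" "t \<le> 2 * R" "smooth B"
  shows "J4 s t B \<le> \<delta> * Lnorm 6 (ball 0 t - ball 0 s) B ^ 2
    + Young_constant (3 * (4 - q) / (6 - q)) \<delta> * hq q / (t - s) powr ((6 - q) / (q - 3))
      * Lnorm q (annulus R) B powr (q / (q - 3))
    + 1 / (t - s)^2 * R powr (3 - 12 / q) * Lnorm q (annulus R) B ^ 4"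
  using J4_le_Young_interpolation[of R s t B q \<delta>] assms
  by (auto simp: hq_def Lnorm_def intro!: add_increasing2)

lemma J4_three_term_bound_from_4:
  assumes "4 \<le> q" "0 \<le> \<delta>" "R > 0" "sqrt 3 * R \<le> s" "t \<le> 2 * R" "smooth B"
  shows "J4 s t B \<le> \<delta> * Lnorm 6 (ball 0 t - ball 0 s) B ^ 2
    + C\<^sub>\<delta> * hq q / (t - s) powr ((6 - q) / (q - 3)) * Lnorm q (annulus R) B powr (q / (q - 3))
    + (32/3 * pi) powr (1 - 4 / q) / (t - s)^2 * R powr (3 - 12 / q) * Lnorm q (annulus R) B ^ 4"
  using J4_le_Lnorm_annulus[of R s t B q] assms by (auto simp: hq_def intro!: add_increasing)

lemma J4_le_Lnorm6_annulus:
  assumes "R > 0" "sqrt 3 * R \<le> s" "t \<le> 2 * R" "smooth B"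
  shows "J4 s t B \<le> (32/3 * pi) powr (1/3) * R / (t - s)^2 * Lnorm 6 (annulus R) B ^ 4"
  using J4_le_Lnorm_annulus[of R s t B 6] assms by simp

theorem lemma2p7:
  shows "(\<forall>q::real. 3 < q \<and> q \<le> 6 \<longrightarrow>
           (\<exists>C>0. \<forall>\<delta>>0. \<exists>C\<delta>>0. \<forall>(R::real) s t (B::real^3 \<Rightarrow> real^3).
              R > 0 \<and> sqrt 3 * R \<le> s \<and> s < t \<and> t \<le> 2 * R \<and> smooth B \<longrightarrow>
              J4 s t B \<le> \<delta> * (Lnorm 6 (ball 0 t - ball 0 s) B)^2
                + C\<delta> * hq q / (t - s) powr ((6 - q) / (q - 3))
                    * (Lnorm q (annulus R) B) powr (q / (q - 3))
                + C / (t - s)^2 * R powr (3 - 12 / q) * (Lnorm q (annulus R) B)^4))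
       \<and> (\<exists>C>0. \<forall>(R::real) s t (B::real^3 \<Rightarrow> real^3).
              R > 0 \<and> sqrt 3 * R \<le> s \<and> s < t \<and> t \<le> 2 * R \<and> smooth B \<longrightarrow>
              J4 s t B \<le> C * R / (t - s)^2 * (Lnorm 6 (annulus R) B)^4)"
  apply (intro conjI allI impI)
  subgoal premises q for q
  proof (cases "q < 4")
    case True
    have "0 < Young_constant (3 * (4 - q) / (6 - q)) \<delta>" if "0 < \<delta>" for \<delta>
      using q True that by (intro Young_constant_pos) (simp_all add: field_simps)
    then show ?thesis
      using q True J4_three_term_bound_below_4[of q] zero_less_one by blast
  next
    case False
    then have "4 \<le> q" "0 < (32/3 * pi) powr (1 - 4 / q)"
      by simp_all
    then show ?thesis
      using J4_three_term_bound_from_4[of q] zero_less_one less_imp_le by blast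
  qed
  using J4_le_Lnorm6_annulus by (intro exI[of _ "(32/3 * pi) powr (1/3)"]) auto

end
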